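(* Fix $k\in\mathcal K$ and let $\hat P_k$ and $V$ be as in the context. For every $d>0$ there exists a nonzero measure $\nu$ on $\mathbb R^k\times\mathbb R^p\times(0,\infty)$ such that $\hat P_k((\alpha,\beta,\tau),\cdot)\ge\nu(\cdot)$ whenever $V(\alpha,\beta,\tau)\le d$.
   Context: Bayesian autoregression with Laplace errors. Data: integers $N,p\ge1$, $k_{\max}\ge0$, known $x_i\in\mathbb R^p$ and observed $y_i\in\mathbb R$ for $i=1,\dots,N$, and known starting values $y_{-k_{\max}+1},\dots,y_0$; $y=(y_1,\dots,y_N)^\top$. $\mathcal K=\{0,1,\dots,k_{\max}\}$. For $k\in\mathcal K$, $w_{i,k}=(y_{i-1},\dots,y_{i-k})^\top$ and $W(k)$ is the $N\times(p+k)$ matrix with $i$th row $(x_i^\top,w_{i,k}^\top)$. Hyperparameter $\sigma>0$. $V(\alpha,\beta,\tau)=\tau^{-1}\sum_{i=1}^N(y_i-x_i^\top\beta-w_{i,k}^\top\alpha)^2$. For $(\alpha,\beta,\tau)$ with $r_i=y_i-x_i^\top\beta-w_{i,k}^\top\alpha$, $f_U(u\mid k,\alpha,\beta,\tau,y)=\prod_{i=1}^N(8\pi u_i^3)^{-1/2}\exp\big(-u_ir_i^2/(2\tau)+|r_i|/(2\sqrt\tau)-1/(8u_i)\big)$ on $(0,\infty)^N$. $\hat P_k$: from $(\alpha,\beta,\tau)$, (1) draw $u'\sim f_U(\cdot\mid k,\alpha,\beta,\tau,y)$, set $Q=\mathrm{diag}(u')$, $M=W(k)^\top QW(k)+\sigma^{-2}I_{p+k}$;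 (2) draw $\tau'$ inverse gamma with shape $N/2$ and scale $[y^\top Qy-y^\top QW(k)M^{-1}W(k)^\top Qy]/2$; (3) draw $(\beta'^\top,\alpha'^\top)^\top\sim N_{p+k}(M^{-1}W(k)^\top Qy,\tau'M^{-1})$; new state $(\alpha',\beta',\tau')$. *)

theory Defs
  imports "HOL-Probability.Probability"
          "Jordan_Normal_Form.Gauss_Jordan_Elimination"
          "Jordan_Normal_Form.Determinant"
begin

text \<open>Data: N, p, known covariates x i j (i = 1..N, j < p), observations and starting
values y t (t = -kmax+1 .. N, indexed by integers), hyperparameter sigma.
A state (alpha, beta, tau) is an element of
R^k x R^p x (0,inf), represented with extensional functions on index sets {..<k}, {..<p}.\<close>

definition state_space :: "nat \<Rightarrow> nat \<Rightarrow> ((nat \<Rightarrow> real) \<times> (nat \<Rightarrow> real) \<times> real) measure" where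
  "state_space p k = (PiM {..<k} (\<lambda>_. lborel)) \<Otimes>\<^sub>M (PiM {..<p} (\<lambda>_. lborel))
                      \<Otimes>\<^sub>M restrict_space lborel {0<..}"

definition resid :: "nat \<Rightarrow> (nat \<Rightarrow> nat \<Rightarrow> real) \<Rightarrow> (int \<Rightarrow> real) \<Rightarrow> nat
    \<Rightarrow> (nat \<Rightarrow> real) \<Rightarrow> (nat \<Rightarrow> real) \<Rightarrow> nat \<Rightarrow> real" where
  "resid p x y k \<alpha> \<beta> i = y (int i) - (\<Sum>j<p. x i j * \<beta> j) - (\<Sum>l<k. y (int i - int l - 1) * \<alpha> l)"

definition V_fun :: "nat \<Rightarrow> nat \<Rightarrow> (nat \<Rightarrow> nat \<Rightarrow> real) \<Rightarrow> (int \<Rightarrow> real) \<Rightarrow> nat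
    \<Rightarrow> (nat \<Rightarrow> real) \<times> (nat \<Rightarrow> real) \<times> real \<Rightarrow> real" where
  "V_fun N p x y k s = (case s of (\<alpha>, \<beta>, \<tau>) \<Rightarrow>
      (1 / \<tau>) * (\<Sum>i=1..N. (resid p x y k \<alpha> \<beta> i)\<^sup>2))"

definition fU :: "nat \<Rightarrow> nat \<Rightarrow> (nat \<Rightarrow> nat \<Rightarrow> real) \<Rightarrow> (int \<Rightarrow> real) \<Rightarrow> nat
    \<Rightarrow> (nat \<Rightarrow> real) \<times> (nat \<Rightarrow> real) \<times> real \<Rightarrow> (nat \<Rightarrow> real) \<Rightarrow> real" where
  "fU N p x y k s u = (case s of (\<alpha>, \<beta>, \<tau>) \<Rightarrow>
     (\<Prod>i=1..N. if u i > 0 then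
        (8 * pi * (u i)^3) powr (-1/2) *
        exp (- u i * (resid p x y k \<alpha> \<beta> i)\<^sup>2 / (2 * \<tau>)
             + \<bar>resid p x y k \<alpha> \<beta> i\<bar> / (2 * sqrt \<tau>) - 1 / (8 * u i))
      else 0))"

text \<open>Design matrix W(k): N x (p+k), i-th row (x_i^T, y_{i-1}, ..., y_{i-k}) (rows 0-based).\<close>
definition Wmat :: "nat \<Rightarrow> nat \<Rightarrow> (nat \<Rightarrow> nat \<Rightarrow> real) \<Rightarrow> (int \<Rightarrow> real) \<Rightarrow> nat \<Rightarrow> real mat" where
  "Wmat N p x y k = mat N (p + k)
     (\<lambda>(i, j). if j < p then x (i + 1) j else y (int i - int (j - p)))"

definition yvec :: "nat \<Rightarrow> (int \<Rightarrow> real) \<Rightarrow> real vec" where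
  "yvec N y = vec N (\<lambda>i. y (int i + 1))"

definition Qmat :: "nat \<Rightarrow> (nat \<Rightarrow> real) \<Rightarrow> real mat" where
  "Qmat N u = mat N N (\<lambda>(i, j). if i = j then u (i + 1) else 0)"

definition Mmat :: "nat \<Rightarrow> nat \<Rightarrow> (nat \<Rightarrow> nat \<Rightarrow> real) \<Rightarrow> (int \<Rightarrow> real) \<Rightarrow> real \<Rightarrow> nat
    \<Rightarrow> (nat \<Rightarrow> real) \<Rightarrow> real mat" where
  "Mmat N p x y \<sigma> k u = transpose_mat (Wmat N p x y k) * Qmat N u * Wmat N p x y k
      + (1 / \<sigma>\<^sup>2) \<cdot>\<^sub>m 1\<^sub>m (p + k)"

definition Minv :: "nat \<Rightarrow> nat \<Rightarrow> (nat \<Rightarrow> nat \<Rightarrow> real) \<Rightarrow> (int \<Rightarrow> real) \<Rightarrow> real \<Rightarrow> nat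
    \<Rightarrow> (nat \<Rightarrow> real) \<Rightarrow> real mat" where
  "Minv N p x y \<sigma> k u = the (mat_inverse (Mmat N p x y \<sigma> k u))"

definition post_mean :: "nat \<Rightarrow> nat \<Rightarrow> (nat \<Rightarrow> nat \<Rightarrow> real) \<Rightarrow> (int \<Rightarrow> real) \<Rightarrow> real \<Rightarrow> nat
    \<Rightarrow> (nat \<Rightarrow> real) \<Rightarrow> real vec" where
  "post_mean N p x y \<sigma> k u =
     Minv N p x y \<sigma> k u *\<^sub>v (transpose_mat (Wmat N p x y k) *\<^sub>v (Qmat N u *\<^sub>v yvec N y))"

definition ig_scale :: "nat \<Rightarrow> nat \<Rightarrow> (nat \<Rightarrow> nat \<Rightarrow> real) \<Rightarrow> (int \<Rightarrow> real) \<Rightarrow> real \<Rightarrow> nat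
    \<Rightarrow> (nat \<Rightarrow> real) \<Rightarrow> real" where
  "ig_scale N p x y \<sigma> k u =
     (let Qy = Qmat N u *\<^sub>v yvec N y;
          b = transpose_mat (Wmat N p x y k) *\<^sub>v Qy
      in (scalar_prod (yvec N y) Qy - scalar_prod b (Minv N p x y \<sigma> k u *\<^sub>v b)) / 2)"

definition inv_gamma_density :: "real \<Rightarrow> real \<Rightarrow> real \<Rightarrow> real" where
  "inv_gamma_density a b t =
     (if t > 0 then b powr a / Gamma a * t powr (- a - 1) * exp (- b / t) else 0)"

definition mvnormal_density :: "nat \<Rightarrow> real vec \<Rightarrow> real mat \<Rightarrow> real vec \<Rightarrow> real" where
  "mvnormal_density d m S z =
     (2 * pi) powr (- real d / 2) * det S powr (-1/2)
     * exp (- scalar_prod (z - m) (the (mat_inverse S) *\<^sub>v (z - m)) / 2)"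

text \<open>The Gibbs kernel hat P_k. theta = (beta^T, alpha^T)^T in R^{p+k} is drawn from
N_{p+k}(M^{-1} W^T Q y, tau' M^{-1}); the new state is (alpha', beta', tau').\<close>
definition Pk :: "nat \<Rightarrow> nat \<Rightarrow> (nat \<Rightarrow> nat \<Rightarrow> real) \<Rightarrow> (int \<Rightarrow> real) \<Rightarrow> real \<Rightarrow> nat
    \<Rightarrow> (nat \<Rightarrow> real) \<times> (nat \<Rightarrow> real) \<times> real
    \<Rightarrow> ((nat \<Rightarrow> real) \<times> (nat \<Rightarrow> real) \<times> real) set \<Rightarrow> ennreal" where
  "Pk N p x y \<sigma> k s A =
     (\<integral>\<^sup>+ u. ennreal (fU N p x y k s u) *
        (\<integral>\<^sup>+ \<tau>'. ennreal (inv_gamma_density (real N / 2) (ig_scale N p x y \<sigma> k u) \<tau>') *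
           (\<integral>\<^sup>+ \<theta>. ennreal (mvnormal_density (p + k) (post_mean N p x y \<sigma> k u)
                                   (\<tau>' \<cdot>\<^sub>m Minv N p x y \<sigma> k u) (vec (p + k) \<theta>)) *
                 indicator A (restrict (\<lambda>l. \<theta> (p + l)) {..<k}, restrict \<theta> {..<p}, \<tau>')
              \<partial>(PiM {..<p + k} (\<lambda>_. lborel)))
         \<partial>lborel)
      \<partial>(PiM {1..N} (\<lambda>_. lborel)))"

end

theory Submission
  imports Defs
begin

(* If V(alpha, beta, tau) <= d, every residual satisfies r_i^2 / tau <= d; dropping the
   nonnegative |r_i| term then bounds the mixing density f_U from below by a function of u
   alone. Steps (2) and (3) of the Gibbs kernel see the current state only through u', so
   the kernel dominates the state-independent measure obtained by running them from this
   minorant of f_U. That measure is nonzero because all densities involved are positive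
   on a set of positive measure: M is positive definite, and with z = M^{-1} W^T Q y twice
   the inverse-gamma scale equals (y - W z)^T Q (y - W z) + sigma^{-2} |z|^2, which vanishes
   only for y = 0. *)

section \<open>Measurable matrix-valued functions\<close>

definition mat_measurable :: "'a measure \<Rightarrow> ('a \<Rightarrow> real mat) \<Rightarrow> nat \<Rightarrow> nat \<Rightarrow> bool" where
  "mat_measurable M F n m \<longleftrightarrow> (\<forall>z\<in>space M. F z \<in> carrier_mat n m) \<and>
     (\<forall>i<n. \<forall>j<m. (\<lambda>z. F z $$ (i,j)) \<in> borel_measurable M)"

definition vec_measurable :: "'a measure \<Rightarrow> ('a \<Rightarrow> real Matrix.vec) \<Rightarrow> nat \<Rightarrow> bool" where
  "vec_measurable M v n \<longleftrightarrow> (\<forall>z\<in>space M. v z \<in> carrier_vec n) \<and>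
     (\<forall>i<n. (\<lambda>z. v z $ i) \<in> borel_measurable M)"

lemma mat_measurable_const: "A \<in> carrier_mat n m \<Longrightarrow> mat_measurable M (\<lambda>_. A) n m"
  by (auto simp: mat_measurable_def)

lemma vec_measurable_const: "v \<in> carrier_vec n \<Longrightarrow> vec_measurable M (\<lambda>_. v) n"
  by (auto simp: vec_measurable_def)

lemma mat_measurable_mat:
  assumes "\<And>i j. i < n \<Longrightarrow> j < m \<Longrightarrow> (\<lambda>z. f z (i,j)) \<in> borel_measurable M"
  shows "mat_measurable M (\<lambda>z. Matrix.mat n m (f z)) n m"
  using assms by (auto simp: mat_measurable_def)

lemma vec_measurable_vec:
  assumes "\<And>i. i < n \<Longrightarrow> (\<lambda>z. f z i) \<in> borel_measurable M"
  shows "vec_measurable M (\<lambda>z. Matrix.vec n (f z)) n"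
  using assms by (auto simp: vec_measurable_def)

lemma mat_measurable_mult:
  assumes F: "mat_measurable M F n m" and G: "mat_measurable M G m l"
  shows "mat_measurable M (\<lambda>z. F z * G z) n l"
  unfolding mat_measurable_def
proof (intro conjI ballI allI impI)
  fix z assume "z \<in> space M" thus "F z * G z \<in> carrier_mat n l"
    using F G by (auto simp: mat_measurable_def)
next
  fix i j assume ij: "i < n" "j < l"
  have "(\<lambda>z. \<Sum>t\<in>{0..<m}. F z $$ (i,t) * G z $$ (t,j)) \<in> borel_measurable M"
    using F G ij by (intro borel_measurable_sum borel_measurable_times) (auto simp: mat_measurable_def)
  moreover have "(F z * G z) $$ (i,j) = (\<Sum>t\<in>{0..<m}. F z $$ (i,t) * G z $$ (t,j))"
    if "z \<in> space M" for z
  proof -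
    have "F z \<in> carrier_mat n m" "G z \<in> carrier_mat m l"
      using F G that by (auto simp: mat_measurable_def)
    thus ?thesis using ij by (auto simp: scalar_prod_def intro!: sum.cong)
  qed
  ultimately show "(\<lambda>z. (F z * G z) $$ (i,j)) \<in> borel_measurable M"
    by (subst measurable_cong) auto
qed

lemma mat_measurable_add:
  assumes F: "mat_measurable M F n m" and G: "mat_measurable M G n m"
  shows "mat_measurable M (\<lambda>z. F z + G z) n m"
  unfolding mat_measurable_def
proof (intro conjI ballI allI impI)
  fix z assume "z \<in> space M" thus "F z + G z \<in> carrier_mat n m"
    using F G by (auto simp: mat_measurable_def)
next
  fix i j assume ij: "i < n" "j < m"
  have "(\<lambda>z. F z $$ (i,j) + G z $$ (i,j)) \<in> borel_measurable M"
    using F G ij by (intro borel_measurable_add) (auto simp: mat_measurable_def)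
  moreover have "\<And>z. z \<in> space M \<Longrightarrow> (F z + G z) $$ (i,j) = F z $$ (i,j) + G z $$ (i,j)"
    using F G ij by (auto simp: mat_measurable_def)
  ultimately show "(\<lambda>z. (F z + G z) $$ (i,j)) \<in> borel_measurable M"
    by (subst measurable_cong) auto
qed

lemma mat_measurable_smult:
  assumes c: "c \<in> borel_measurable M" and F: "mat_measurable M F n m"
  shows "mat_measurable M (\<lambda>z. c z \<cdot>\<^sub>m F z) n m"
  unfolding mat_measurable_def
proof (intro conjI ballI allI impI)
  fix z assume "z \<in> space M" thus "c z \<cdot>\<^sub>m F z \<in> carrier_mat n m"
    using F by (auto simp: mat_measurable_def)
next
  fix i j assume ij: "i < n" "j < m"
  have "(\<lambda>z. c z * F z $$ (i,j)) \<in> borel_measurable M"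
    using c F ij by (intro borel_measurable_times) (auto simp: mat_measurable_def)
  moreover have "\<And>z. z \<in> space M \<Longrightarrow> (c z \<cdot>\<^sub>m F z) $$ (i,j) = c z * F z $$ (i,j)"
    using F ij by (auto simp: mat_measurable_def)
  ultimately show "(\<lambda>z. (c z \<cdot>\<^sub>m F z) $$ (i,j)) \<in> borel_measurable M"
    by (subst measurable_cong) auto
qed

lemma vec_measurable_mult_mat_vec:
  assumes F: "mat_measurable M F n m" and v: "vec_measurable M v m"
  shows "vec_measurable M (\<lambda>z. F z *\<^sub>v v z) n"
  unfolding vec_measurable_def
proof (intro conjI ballI allI impI)
  fix z assume "z \<in> space M" thus "F z *\<^sub>v v z \<in> carrier_vec n"
    using F v by (auto simp: mat_measurable_def vec_measurable_def)
next
  fix i assume i: "i < n"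
  have "(\<lambda>z. \<Sum>t\<in>{0..<m}. F z $$ (i,t) * v z $ t) \<in> borel_measurable M"
    using F v i by (intro borel_measurable_sum borel_measurable_times)
      (auto simp: mat_measurable_def vec_measurable_def)
  moreover have "(F z *\<^sub>v v z) $ i = (\<Sum>t\<in>{0..<m}. F z $$ (i,t) * v z $ t)" if "z \<in> space M" for z
  proof -
    have "F z \<in> carrier_mat n m" "v z \<in> carrier_vec m"
      using F v that by (auto simp: mat_measurable_def vec_measurable_def)
    thus ?thesis using i by (auto simp: scalar_prod_def intro!: sum.cong)
  qed
  ultimately show "(\<lambda>z. (F z *\<^sub>v v z) $ i) \<in> borel_measurable M"
    by (subst measurable_cong) auto
qed

lemma vec_measurable_minus:
  assumes v: "vec_measurable M v n" and w: "vec_measurable M w n"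
  shows "vec_measurable M (\<lambda>z. v z - w z) n"
  unfolding vec_measurable_def
proof (intro conjI ballI allI impI)
  fix z assume "z \<in> space M" thus "v z - w z \<in> carrier_vec n"
    using v w by (auto simp: vec_measurable_def)
next
  fix i assume i: "i < n"
  have "(\<lambda>z. v z $ i - w z $ i) \<in> borel_measurable M"
    using v w i by (intro borel_measurable_diff) (auto simp: vec_measurable_def)
  moreover have "\<And>z. z \<in> space M \<Longrightarrow> (v z - w z) $ i = v z $ i - w z $ i"
    using v w i by (auto simp: vec_measurable_def)
  ultimately show "(\<lambda>z. (v z - w z) $ i) \<in> borel_measurable M"
    by (subst measurable_cong) auto
qed

lemma borel_measurable_scalar_prod:
  assumes v: "vec_measurable M v n" and w: "vec_measurable M w n"
  shows "(\<lambda>z. scalar_prod (v z) (w z)) \<in> borel_measurable M"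
proof -
  have "(\<lambda>z. \<Sum>t\<in>{0..<n}. v z $ t * w z $ t) \<in> borel_measurable M"
    using v w by (intro borel_measurable_sum borel_measurable_times) (auto simp: vec_measurable_def)
  moreover have "\<And>z. z \<in> space M \<Longrightarrow> scalar_prod (v z) (w z) = (\<Sum>t\<in>{0..<n}. v z $ t * w z $ t)"
    using v w by (auto simp: vec_measurable_def scalar_prod_def)
  ultimately show ?thesis by (subst measurable_cong) auto
qed

lemma borel_measurable_det:
  assumes F: "mat_measurable M F n n"
  shows "(\<lambda>z. Determinant.det (F z)) \<in> borel_measurable M"
proof -
  have "(\<lambda>z. \<Sum>p\<in>{p. p permutes {0..<n}}. signof p * (\<Prod>i=0..<n. F z $$ (i, p i)))
      \<in> borel_measurable M"
  proof (intro borel_measurable_sum borel_measurable_times borel_measurable_prod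
      borel_measurable_const)
    fix p i assume "p \<in> {p. p permutes {0..<n}}" "i \<in> {0..<n}"
    hence "p i < n" using permutes_in_image by fastforce
    thus "(\<lambda>z. F z $$ (i, p i)) \<in> borel_measurable M"
      using F \<open>i \<in> _\<close> by (auto simp: mat_measurable_def)
  qed
  moreover have "\<And>z. z \<in> space M \<Longrightarrow> Determinant.det (F z) =
      (\<Sum>p\<in>{p. p permutes {0..<n}}. signof p * (\<Prod>i=0..<n. F z $$ (i, p i)))"
    using F by (intro det_def') (auto simp: mat_measurable_def)
  ultimately show ?thesis by (subst measurable_cong) auto
qed

lemma mat_measurable_mat_delete:
  assumes F: "mat_measurable M F n n" and "i < n" "j < n"
  shows "mat_measurable M (\<lambda>z. mat_delete (F z) i j) (n - 1) (n - 1)"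
  unfolding mat_measurable_def
proof (intro conjI ballI allI impI)
  fix z assume "z \<in> space M" thus "mat_delete (F z) i j \<in> carrier_mat (n - 1) (n - 1)"
    using F by (auto simp: mat_measurable_def mat_delete_def)
next
  fix a b assume ab: "a < n - 1" "b < n - 1"
  let ?a = "if a < i then a else Suc a" and ?b = "if b < j then b else Suc b"
  have "(\<lambda>z. F z $$ (?a, ?b)) \<in> borel_measurable M"
    using F ab by (auto simp: mat_measurable_def)
  moreover have "\<And>z. z \<in> space M \<Longrightarrow> mat_delete (F z) i j $$ (a,b) = F z $$ (?a, ?b)"
    using F ab by (auto simp: mat_measurable_def mat_delete_def)
  ultimately show "(\<lambda>z. mat_delete (F z) i j $$ (a,b)) \<in> borel_measurable M"
    by (subst measurable_cong) auto
qed

lemma mat_inverse_eq_adj_mat: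
  fixes A :: "'a :: field mat"
  assumes A: "A \<in> carrier_mat n n" and d: "Determinant.det A \<noteq> 0"
  shows "mat_inverse A = Some ((1 / Determinant.det A) \<cdot>\<^sub>m adj_mat A)"
proof -
  let ?C = "(1 / Determinant.det A) \<cdot>\<^sub>m adj_mat A"
  have "A \<in> Units (ring_mat TYPE('a) n (undefined :: unit))"
    by (rule det_non_zero_imp_unit[OF A d])
  then obtain B where B: "mat_inverse A = Some B"
    using mat_inverse(1)[OF A, where b = "undefined :: unit"] by (cases "mat_inverse A") auto
  from mat_inverse(2)[OF A B] have AB: "A * B = 1\<^sub>m n" and Bc: "B \<in> carrier_mat n n" by auto
  have Cc: "?C \<in> carrier_mat n n" using adj_mat(1)[OF A] by simp
  have CA: "?C * A = 1\<^sub>m n"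
    using adj_mat(1,3)[OF A] A d by (simp add: mult_smult_assoc_mat) (intro eq_matI; simp)
  have "?C = ?C * (A * B)" by (simp add: AB right_mult_one_mat[OF Cc])
  also have "\<dots> = (?C * A) * B" using Cc A Bc by simp
  also have "\<dots> = B" using CA Bc by simp
  finally show ?thesis using B by simp
qed

lemma mat_measurable_mat_inverse:
  assumes F: "mat_measurable M F n n" and d: "\<And>z. z \<in> space M \<Longrightarrow> Determinant.det (F z) \<noteq> 0"
  shows "mat_measurable M (\<lambda>z. the (mat_inverse (F z))) n n"
  unfolding mat_measurable_def
proof (intro conjI ballI allI impI)
  fix z assume "z \<in> space M"
  thus "the (mat_inverse (F z)) \<in> carrier_mat n n"
    using F d mat_inverse_eq_adj_mat[of "F z" n] adj_mat(1)[of "F z" n]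
    by (auto simp: mat_measurable_def)
next
  fix i j assume ij: "i < n" "j < n"
  have "(\<lambda>z. (1 / Determinant.det (F z)) *
      ((- 1) ^ (j + i) * Determinant.det (mat_delete (F z) j i))) \<in> borel_measurable M"
    using ij by (intro borel_measurable_times borel_measurable_divide borel_measurable_const
        borel_measurable_det[OF F] borel_measurable_det[OF mat_measurable_mat_delete[OF F]])
  moreover have "\<And>z. z \<in> space M \<Longrightarrow> the (mat_inverse (F z)) $$ (i,j) =
      (1 / Determinant.det (F z)) * ((- 1) ^ (j + i) * Determinant.det (mat_delete (F z) j i))"
    using F d ij mat_inverse_eq_adj_mat[of "F z" n for z] adj_mat(1)[of "F z" n for z]
    by (auto simp: mat_measurable_def adj_mat_def cofactor_def)
  ultimately show "(\<lambda>z. the (mat_inverse (F z)) $$ (i,j)) \<in> borel_measurable M"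
    by (subst measurable_cong) auto
qed


section \<open>The precision matrix and the inverse-gamma scale\<close>

definition pos_weights :: "nat \<Rightarrow> (nat \<Rightarrow> real) \<Rightarrow> bool" where
  "pos_weights N u \<longleftrightarrow> (\<forall>i\<in>{1..N}. 0 < u i)"

lemma Wmat_carrier[simp]: "Wmat N p x y k \<in> carrier_mat N (p + k)"
  by (simp add: Wmat_def)

lemma Qmat_carrier[simp]: "Qmat N u \<in> carrier_mat N N"
  by (simp add: Qmat_def)

lemma yvec_carrier[simp]: "yvec N y \<in> carrier_vec N"
  by (simp add: yvec_def)

lemma Mmat_carrier[simp]: "Mmat N p x y \<sigma> k u \<in> carrier_mat (p + k) (p + k)"
  by (simp add: Mmat_def)

lemma scalar_prod_Qmat:
  assumes a: "a \<in> carrier_vec N" and c: "c \<in> carrier_vec N"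
  shows "scalar_prod a (Qmat N u *\<^sub>v c) = (\<Sum>i<N. u (i+1) * a $ i * c $ i)"
proof -
  have Qc: "(Qmat N u *\<^sub>v c) $ i = u (i+1) * c $ i" if "i < N" for i
  proof -
    have "(Qmat N u *\<^sub>v c) $ i = (\<Sum>j=0..<N. (if i = j then u (i+1) else 0) * c $ j)"
      using that c by (simp add: Qmat_def scalar_prod_def)
    also have "\<dots> = (\<Sum>j=0..<N. if j = i then u (i+1) * c $ i else 0)"
      by (intro sum.cong) auto
    finally show ?thesis using that by (simp add: sum.delta)
  qed
  have "scalar_prod a (Qmat N u *\<^sub>v c) = (\<Sum>i\<in>{0..<N}. a $ i * (Qmat N u *\<^sub>v c) $ i)"
    by (simp add: scalar_prod_def Qmat_def del: index_mult_mat_vec)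
  also have "\<dots> = (\<Sum>i\<in>{0..<N}. u (i+1) * a $ i * c $ i)"
    by (intro sum.cong) (auto simp: Qc)
  finally show ?thesis by (simp add: atLeast0LessThan)
qed

lemma scalar_prod_self_pos:
  assumes v: "v \<in> carrier_vec n" and nz: "v \<noteq> 0\<^sub>v n"
  shows "scalar_prod v (v :: real Matrix.vec) > 0"
proof -
  obtain i where i: "i < n" "v $ i \<noteq> 0"
    using nz v by (metis carrier_vecD eq_vecI index_zero_vec(1) index_zero_vec(2))
  have "0 < (v $ i)^2" using i by simp
  also have "\<dots> \<le> (\<Sum>j<n. (v $ j)^2)" using i by (intro member_le_sum) auto
  also have "\<dots> = scalar_prod v v" using v by (simp add: scalar_prod_def atLeast0LessThan power2_eq_square)
  finally show ?thesis .
qed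

lemma smult_one_mat_mult_vec:
  assumes v: "v \<in> carrier_vec n"
  shows "((c::real) \<cdot>\<^sub>m 1\<^sub>m n) *\<^sub>v v = c \<cdot>\<^sub>v v"
proof (rule eq_vecI)
  fix i assume "i < dim_vec (c \<cdot>\<^sub>v v)"
  hence i: "i < n" using v by simp
  have "((c \<cdot>\<^sub>m 1\<^sub>m n) *\<^sub>v v) $ i = (\<Sum>j = 0..<n. c * (if j = i then 1 else 0) * v $ j)"
    using i v by (simp add: scalar_prod_def)
  also have "\<dots> = (\<Sum>j\<in>{0..<n}. if j = i then c * v $ i else 0)"
    by (rule sum.cong) auto
  finally show "((c \<cdot>\<^sub>m 1\<^sub>m n) *\<^sub>v v) $ i = (c \<cdot>\<^sub>v v) $ i" using i v by (simp add: sum.delta)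
qed (use v in simp)

lemma Mmat_mult_vec:
  assumes v: "v \<in> carrier_vec (p + k)"
  shows "Mmat N p x y \<sigma> k u *\<^sub>v v =
    transpose_mat (Wmat N p x y k) *\<^sub>v (Qmat N u *\<^sub>v (Wmat N p x y k *\<^sub>v v)) + (1 / \<sigma>\<^sup>2) \<cdot>\<^sub>v v"
proof -
  let ?W = "Wmat N p x y k" and ?Q = "Qmat N u"
  have T: "transpose_mat ?W \<in> carrier_mat (p+k) N" by simp
  have Wv: "?W *\<^sub>v v \<in> carrier_vec N" by (rule mult_mat_vec_carrier[OF Wmat_carrier v])
  have TQ: "transpose_mat ?W * ?Q \<in> carrier_mat (p+k) N" by (rule mult_carrier_mat[OF T Qmat_carrier])
  have "Mmat N p x y \<sigma> k u *\<^sub>v v =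
      (transpose_mat ?W * ?Q * ?W) *\<^sub>v v + ((1 / \<sigma>\<^sup>2) \<cdot>\<^sub>m 1\<^sub>m (p + k)) *\<^sub>v v"
    unfolding Mmat_def using v mult_carrier_mat[OF TQ Wmat_carrier] by (intro add_mult_distrib_mat_vec) auto
  also have "(transpose_mat ?W * ?Q * ?W) *\<^sub>v v = (transpose_mat ?W * ?Q) *\<^sub>v (?W *\<^sub>v v)"
    by (rule assoc_mult_mat_vec[OF TQ Wmat_carrier v])
  also have "\<dots> = transpose_mat ?W *\<^sub>v (?Q *\<^sub>v (?W *\<^sub>v v))"
    by (rule assoc_mult_mat_vec[OF T Qmat_carrier Wv])
  also have "((1 / \<sigma>\<^sup>2) \<cdot>\<^sub>m 1\<^sub>m (p + k)) *\<^sub>v v = (1 / \<sigma>\<^sup>2) \<cdot>\<^sub>v v"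
    using v by (rule smult_one_mat_mult_vec)
  finally show ?thesis .
qed

lemma scalar_prod_Mmat:
  assumes v: "v \<in> carrier_vec (p + k)"
  shows "scalar_prod v (Mmat N p x y \<sigma> k u *\<^sub>v v) =
     (\<Sum>i<N. u (i+1) * ((Wmat N p x y k *\<^sub>v v) $ i)^2) + (1 / \<sigma>\<^sup>2) * scalar_prod v v"
proof -
  let ?W = "Wmat N p x y k" and ?Q = "Qmat N u"
  have Wv: "?W *\<^sub>v v \<in> carrier_vec N" by (rule mult_mat_vec_carrier[OF Wmat_carrier v])
  have QWv: "?Q *\<^sub>v (?W *\<^sub>v v) \<in> carrier_vec N" by (rule mult_mat_vec_carrier[OF Qmat_carrier Wv])
  have TQWv: "transpose_mat ?W *\<^sub>v (?Q *\<^sub>v (?W *\<^sub>v v)) \<in> carrier_vec (p+k)"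
    by (rule mult_mat_vec_carrier[OF _ QWv]) simp
  have "scalar_prod v (Mmat N p x y \<sigma> k u *\<^sub>v v) =
     scalar_prod v (transpose_mat ?W *\<^sub>v (?Q *\<^sub>v (?W *\<^sub>v v))) + scalar_prod v ((1 / \<sigma>\<^sup>2) \<cdot>\<^sub>v v)"
    unfolding Mmat_mult_vec[OF v] using v TQWv by (intro scalar_prod_add_distrib) auto
  also have "scalar_prod v (transpose_mat ?W *\<^sub>v (?Q *\<^sub>v (?W *\<^sub>v v)))
      = scalar_prod (?Q *\<^sub>v (?W *\<^sub>v v)) (?W *\<^sub>v v)"
    using v TQWv by (simp add: comm_scalar_prod[of v "p+k"] transpose_vec_mult_scalar[OF Wmat_carrier v QWv])
  also have "\<dots> = (\<Sum>i<N. u (i+1) * ((?W *\<^sub>v v) $ i)^2)"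
    using Wv QWv by (simp add: comm_scalar_prod[of _ N] scalar_prod_Qmat power2_eq_square mult.assoc)
  also have "scalar_prod v ((1 / \<sigma>\<^sup>2) \<cdot>\<^sub>v v) = (1 / \<sigma>\<^sup>2) * scalar_prod v v"
    using v by (intro scalar_prod_smult_distrib) auto
  finally show ?thesis .
qed

lemma det_Mmat_nonzero:
  assumes u: "pos_weights N u" and \<sigma>: "\<sigma> > 0"
  shows "Determinant.det (Mmat N p x y \<sigma> k u) \<noteq> 0"
proof
  assume "Determinant.det (Mmat N p x y \<sigma> k u) = 0"
  then obtain v where v: "v \<in> carrier_vec (p+k)" "v \<noteq> 0\<^sub>v (p+k)"
      "Mmat N p x y \<sigma> k u *\<^sub>v v = 0\<^sub>v (p+k)"
    using det_0_iff_vec_prod_zero[OF Mmat_carrier] by blast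
  have "scalar_prod v (Mmat N p x y \<sigma> k u *\<^sub>v v) = 0" using v by simp
  moreover have "(\<Sum>i<N. u (i+1) * ((Wmat N p x y k *\<^sub>v v) $ i)^2) \<ge> 0"
    using u by (intro sum_nonneg mult_nonneg_nonneg) (auto simp: pos_weights_def less_imp_le)
  moreover have "(1 / \<sigma>\<^sup>2) * scalar_prod v v > 0" using scalar_prod_self_pos[OF v(1,2)] \<sigma> by simp
  ultimately show False using scalar_prod_Mmat[OF v(1), of N x y \<sigma> u] by linarith
qed

lemma Minv:
  assumes u: "pos_weights N u" and \<sigma>: "\<sigma> > 0"
  shows "Mmat N p x y \<sigma> k u * Minv N p x y \<sigma> k u = 1\<^sub>m (p+k)"
    and "Minv N p x y \<sigma> k u \<in> carrier_mat (p+k) (p+k)"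
    and "Determinant.det (Minv N p x y \<sigma> k u) \<noteq> 0"
proof -
  let ?M = "Mmat N p x y \<sigma> k u"
  have "mat_inverse ?M = Some (Minv N p x y \<sigma> k u)"
    using mat_inverse_eq_adj_mat[OF Mmat_carrier det_Mmat_nonzero[OF u \<sigma>]] by (simp add: Minv_def)
  from mat_inverse(2)[OF Mmat_carrier this]
  show MB: "?M * Minv N p x y \<sigma> k u = 1\<^sub>m (p+k)"
    and Bc: "Minv N p x y \<sigma> k u \<in> carrier_mat (p+k) (p+k)" by auto
  have "Determinant.det ?M * Determinant.det (Minv N p x y \<sigma> k u) = 1"
    using det_mult[OF Mmat_carrier[of N p x y \<sigma> k u] Bc] MB by simp
  thus "Determinant.det (Minv N p x y \<sigma> k u) \<noteq> 0" by auto
qed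

(* Completing the square, using M z = W^T Q y. *)
lemma ig_scale_eq:
  fixes N p k :: nat and x :: "nat \<Rightarrow> nat \<Rightarrow> real" and y :: "int \<Rightarrow> real"
    and \<sigma> :: real and u :: "nat \<Rightarrow> real"
  assumes u: "pos_weights N u" and \<sigma>: "\<sigma> > 0"
  defines "z \<equiv> Minv N p x y \<sigma> k u *\<^sub>v (transpose_mat (Wmat N p x y k) *\<^sub>v (Qmat N u *\<^sub>v yvec N y))"
  shows "2 * ig_scale N p x y \<sigma> k u =
    (\<Sum>i<N. u (i+1) * (yvec N y $ i - (Wmat N p x y k *\<^sub>v z) $ i)^2) + 1 / \<sigma>\<^sup>2 * scalar_prod z z"
proof -
  let ?W = "Wmat N p x y k" and ?Y = "yvec N y" and ?M = "Mmat N p x y \<sigma> k u"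
  define Qy where "Qy = Qmat N u *\<^sub>v ?Y"
  define b where "b = transpose_mat ?W *\<^sub>v Qy"
  define w where "w = ?W *\<^sub>v z"
  have Qyc: "Qy \<in> carrier_vec N"
    unfolding Qy_def by (rule mult_mat_vec_carrier[OF Qmat_carrier yvec_carrier])
  have bc: "b \<in> carrier_vec (p+k)" unfolding b_def by (rule mult_mat_vec_carrier[OF _ Qyc]) simp
  have zc: "z \<in> carrier_vec (p+k)" unfolding z_def Qy_def[symmetric] b_def[symmetric]
    by (rule mult_mat_vec_carrier[OF Minv(2)[OF u \<sigma>] bc])
  have wc: "w \<in> carrier_vec N" unfolding w_def by (rule mult_mat_vec_carrier[OF Wmat_carrier zc])
  have Mz: "?M *\<^sub>v z = b"
    unfolding z_def Qy_def[symmetric] b_def[symmetric]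
    using assoc_mult_mat_vec[symmetric, OF Mmat_carrier Minv(2)[OF u \<sigma>] bc] Minv(1)[OF u \<sigma>] bc
    by simp
  have scale: "2 * ig_scale N p x y \<sigma> k u = scalar_prod ?Y Qy - scalar_prod b z"
    unfolding ig_scale_def Let_def z_def Qy_def b_def by simp
  have yQy: "scalar_prod ?Y Qy = (\<Sum>i<N. u (i+1) * ?Y $ i * ?Y $ i)"
    unfolding Qy_def by (rule scalar_prod_Qmat) auto
  have bz_quad: "scalar_prod b z = (\<Sum>i<N. u (i+1) * (w $ i)^2) + 1 / \<sigma>\<^sup>2 * scalar_prod z z"
    using scalar_prod_Mmat[OF zc, of N x y \<sigma> u] Mz comm_scalar_prod[OF bc zc] unfolding w_def by simp
  have bz_cross: "scalar_prod b z = (\<Sum>i<N. u (i+1) * w $ i * ?Y $ i)"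
  proof -
    have "scalar_prod b z = scalar_prod Qy w"
      unfolding b_def w_def by (rule transpose_vec_mult_scalar[OF Wmat_carrier zc Qyc])
    also have "\<dots> = scalar_prod w Qy" using Qyc wc by (rule comm_scalar_prod)
    finally show ?thesis unfolding Qy_def using wc by (simp add: scalar_prod_Qmat)
  qed
  have "(\<Sum>i<N. u (i+1) * (?Y $ i - w $ i)^2) =
      (\<Sum>i<N. u (i+1) * ?Y $ i * ?Y $ i) - 2 * (\<Sum>i<N. u (i+1) * w $ i * ?Y $ i)
      + (\<Sum>i<N. u (i+1) * (w $ i)^2)"
    by (simp add: power2_eq_square algebra_simps sum.distrib sum_subtractf sum_distrib_left)
  thus ?thesis using scale yQy bz_quad bz_cross unfolding w_def by simp
qed

lemma ig_scale_pos:
  assumes u: "pos_weights N u" and \<sigma>: "\<sigma> > 0" and y: "\<exists>i\<in>{1..N}. y (int i) \<noteq> 0"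
  shows "ig_scale N p x y \<sigma> k u > 0"
proof -
  define z where "z = Minv N p x y \<sigma> k u *\<^sub>v
      (transpose_mat (Wmat N p x y k) *\<^sub>v (Qmat N u *\<^sub>v yvec N y))"
  define S where "S = (\<Sum>i<N. u (i+1) * (yvec N y $ i - (Wmat N p x y k *\<^sub>v z) $ i)^2)"
  have zc: "z \<in> carrier_vec (p+k)"
    unfolding z_def
    by (intro mult_mat_vec_carrier[OF Minv(2)[OF u \<sigma>]]
        mult_mat_vec_carrier[OF _ mult_mat_vec_carrier[OF Qmat_carrier yvec_carrier]]) simp
  have eq: "2 * ig_scale N p x y \<sigma> k u = S + 1 / \<sigma>\<^sup>2 * scalar_prod z z"
    unfolding S_def z_def by (rule ig_scale_eq[OF u \<sigma>])
  have S_nonneg: "S \<ge> 0"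
    unfolding S_def using u by (intro sum_nonneg mult_nonneg_nonneg) (auto simp: pos_weights_def less_imp_le)
  show ?thesis
  proof (cases "z = 0\<^sub>v (p+k)")
    case False
    hence "1 / \<sigma>\<^sup>2 * scalar_prod z z > 0" using scalar_prod_self_pos[OF zc] \<sigma> by simp
    thus ?thesis using eq S_nonneg by linarith
  next
    case True
    obtain i where i: "i \<in> {1..N}" "y (int i) \<noteq> 0" using y by auto
    have "S = (\<Sum>j<N. u (j+1) * (yvec N y $ j)^2)"
      unfolding S_def True by (intro sum.cong) (auto simp: Wmat_def scalar_prod_def)
    also have "0 < u i * (y (int i))^2" using i u by (simp add: pos_weights_def)
    hence "0 < (\<Sum>j<N. u (j+1) * (yvec N y $ j)^2)"
    proof (rule order_less_le_trans)
      have "u i * (y (int i))^2 = u ((i - 1) + 1) * (yvec N y $ (i - 1))^2"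
        using i by (auto simp: yvec_def of_nat_diff)
      also have "\<dots> \<le> (\<Sum>j<N. u (j+1) * (yvec N y $ j)^2)"
        using i u by (intro member_le_sum) (auto simp: pos_weights_def less_imp_le)
      finally show "u i * (y (int i))^2 \<le> \<dots>" .
    qed
    finally show ?thesis using eq True by simp
  qed
qed

lemma mat_measurable_Qmat:
  assumes U: "\<And>i. i \<in> {1..N} \<Longrightarrow> (\<lambda>z. U z i) \<in> borel_measurable M"
  shows "mat_measurable M (\<lambda>z. Qmat N (U z)) N N"
  unfolding Qmat_def
proof (rule mat_measurable_mat)
  fix i j assume "i < N" "j < N"
  thus "(\<lambda>z. (\<lambda>(i, j). if i = j then U z (i + 1) else 0) (i, j)) \<in> borel_measurable M"
    using U[of "i+1"] by (cases "i = j") auto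
qed

lemma mat_measurable_Mmat:
  assumes U: "\<And>i. i \<in> {1..N} \<Longrightarrow> (\<lambda>z. U z i) \<in> borel_measurable M"
  shows "mat_measurable M (\<lambda>z. Mmat N p x y \<sigma> k (U z)) (p+k) (p+k)"
proof -
  have W: "mat_measurable M (\<lambda>_. Wmat N p x y k) N (p+k)" by (rule mat_measurable_const) simp
  have WT: "mat_measurable M (\<lambda>_. transpose_mat (Wmat N p x y k)) (p+k) N"
    by (rule mat_measurable_const) simp
  have I: "mat_measurable M (\<lambda>_. (1 / \<sigma>\<^sup>2) \<cdot>\<^sub>m 1\<^sub>m (p + k)) (p+k) (p+k)"
    by (rule mat_measurable_const) simp
  show ?thesis unfolding Mmat_def
    by (rule mat_measurable_add[OF mat_measurable_mult[OF mat_measurable_mult[OF WT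
          mat_measurable_Qmat[OF U]] W] I])
qed

lemma mat_measurable_Minv:
  assumes U: "\<And>i. i \<in> {1..N} \<Longrightarrow> (\<lambda>z. U z i) \<in> borel_measurable M"
    and pos: "\<And>z. z \<in> space M \<Longrightarrow> pos_weights N (U z)" and \<sigma>: "\<sigma> > 0"
  shows "mat_measurable M (\<lambda>z. Minv N p x y \<sigma> k (U z)) (p+k) (p+k)"
  unfolding Minv_def
  by (rule mat_measurable_mat_inverse[OF mat_measurable_Mmat[OF U] det_Mmat_nonzero[OF pos \<sigma>]])

lemma vec_measurable_WQy:
  assumes U: "\<And>i. i \<in> {1..N} \<Longrightarrow> (\<lambda>z. U z i) \<in> borel_measurable M"
  shows "vec_measurable M (\<lambda>z. Qmat N (U z) *\<^sub>v yvec N y) N"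
    and "vec_measurable M (\<lambda>z. transpose_mat (Wmat N p x y k) *\<^sub>v (Qmat N (U z) *\<^sub>v yvec N y)) (p+k)"
proof -
  show Qy: "vec_measurable M (\<lambda>z. Qmat N (U z) *\<^sub>v yvec N y) N"
    by (rule vec_measurable_mult_mat_vec[OF mat_measurable_Qmat[OF U] vec_measurable_const[OF yvec_carrier]])
  have WT: "mat_measurable M (\<lambda>_. transpose_mat (Wmat N p x y k)) (p+k) N"
    by (rule mat_measurable_const) simp
  show "vec_measurable M (\<lambda>z. transpose_mat (Wmat N p x y k) *\<^sub>v (Qmat N (U z) *\<^sub>v yvec N y)) (p+k)"
    by (rule vec_measurable_mult_mat_vec[OF WT Qy])
qed

lemma borel_measurable_ig_scale:
  assumes U: "\<And>i. i \<in> {1..N} \<Longrightarrow> (\<lambda>z. U z i) \<in> borel_measurable M"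
    and pos: "\<And>z. z \<in> space M \<Longrightarrow> pos_weights N (U z)" and \<sigma>: "\<sigma> > 0"
  shows "(\<lambda>z. ig_scale N p x y \<sigma> k (U z)) \<in> borel_measurable M"
  unfolding ig_scale_def Let_def
  by (intro borel_measurable_divide borel_measurable_diff borel_measurable_const
      borel_measurable_scalar_prod[OF vec_measurable_const[OF yvec_carrier] vec_measurable_WQy(1)[OF U]]
      borel_measurable_scalar_prod[OF vec_measurable_WQy(2)[OF U]
        vec_measurable_mult_mat_vec[OF mat_measurable_Minv[OF U pos \<sigma>] vec_measurable_WQy(2)[OF U]]])

lemma vec_measurable_post_mean:
  assumes U: "\<And>i. i \<in> {1..N} \<Longrightarrow> (\<lambda>z. U z i) \<in> borel_measurable M"
    and pos: "\<And>z. z \<in> space M \<Longrightarrow> pos_weights N (U z)" and \<sigma>: "\<sigma> > 0"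
  shows "vec_measurable M (\<lambda>z. post_mean N p x y \<sigma> k (U z)) (p+k)"
  unfolding post_mean_def
  by (rule vec_measurable_mult_mat_vec[OF mat_measurable_Minv[OF U pos \<sigma>] vec_measurable_WQy(2)[OF U]])

lemma borel_measurable_inv_gamma_density:
  assumes U: "\<And>i. i \<in> {1..N} \<Longrightarrow> (\<lambda>z. U z i) \<in> borel_measurable M"
    and pos: "\<And>z. z \<in> space M \<Longrightarrow> pos_weights N (U z)" and \<sigma>: "\<sigma> > 0"
    and T: "T \<in> borel_measurable M"
  shows "(\<lambda>z. inv_gamma_density (real N / 2) (ig_scale N p x y \<sigma> k (U z)) (T z)) \<in> borel_measurable M"
proof -
  note [measurable] = borel_measurable_ig_scale[OF U pos \<sigma>] T
  show ?thesis unfolding inv_gamma_density_def by measurable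
qed

lemma borel_measurable_mvnormal_density:
  assumes U: "\<And>i. i \<in> {1..N} \<Longrightarrow> (\<lambda>z. U z i) \<in> borel_measurable M"
    and pos: "\<And>z. z \<in> space M \<Longrightarrow> pos_weights N (U z)" and \<sigma>: "\<sigma> > 0"
    and T: "T \<in> borel_measurable M" and T_pos: "\<And>z. z \<in> space M \<Longrightarrow> T z > 0"
    and V: "vec_measurable M V (p+k)"
  shows "(\<lambda>z. mvnormal_density (p+k) (post_mean N p x y \<sigma> k (U z))
            (T z \<cdot>\<^sub>m Minv N p x y \<sigma> k (U z)) (V z)) \<in> borel_measurable M"
proof -
  have S: "mat_measurable M (\<lambda>z. T z \<cdot>\<^sub>m Minv N p x y \<sigma> k (U z)) (p+k) (p+k)"
    by (rule mat_measurable_smult[OF T mat_measurable_Minv[OF U pos \<sigma>]])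
  have det_S: "Determinant.det (T z \<cdot>\<^sub>m Minv N p x y \<sigma> k (U z)) \<noteq> 0" if "z \<in> space M" for z
    using Minv(2,3)[OF pos[OF that] \<sigma>, of p x y k] T_pos[OF that] by simp
  have D: "vec_measurable M (\<lambda>z. V z - post_mean N p x y \<sigma> k (U z)) (p+k)"
    by (rule vec_measurable_minus[OF V vec_measurable_post_mean[OF U pos \<sigma>]])
  note [measurable] = borel_measurable_det[OF S]
    borel_measurable_scalar_prod[OF D vec_measurable_mult_mat_vec[OF mat_measurable_mat_inverse[OF S det_S] D]]
  show ?thesis unfolding mvnormal_density_def by measurable
qed

section \<open>A state-independent minorant of the mixing density\<close>

definition fU_minorant :: "nat \<Rightarrow> real \<Rightarrow> (nat \<Rightarrow> real) \<Rightarrow> real" where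
  "fU_minorant N d u = (\<Prod>i=1..N. if 0 < u i then (8 * pi * (u i)^3) powr (-1/2) *
        exp (- u i * d / 2 - 1 / (8 * u i)) else 0)"

lemma fU_minorant_le_fU:
  assumes s: "s \<in> space (state_space p k)" and V: "V_fun N p x y k s \<le> d"
  shows "fU_minorant N d u \<le> fU N p x y k s u"
proof -
  obtain \<alpha> \<beta> \<tau> where s_eq: "s = (\<alpha>, \<beta>, \<tau>)" by (cases s)
  have \<tau>: "\<tau> > 0" using s s_eq by (auto simp: state_space_def space_pair_measure space_restrict_space)
  have resid_bound: "resid p x y k \<alpha> \<beta> i ^ 2 / \<tau> \<le> d" if "i \<in> {1..N}" for i
  proof -
    have "resid p x y k \<alpha> \<beta> i ^ 2 \<le> (\<Sum>j=1..N. (resid p x y k \<alpha> \<beta> j)\<^sup>2)"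
      using that by (intro member_le_sum) auto
    thus ?thesis using V \<tau> s_eq by (simp add: V_fun_def divide_right_mono field_simps)
  qed
  show ?thesis
    unfolding fU_minorant_def fU_def s_eq prod.case
  proof (intro prod_mono conjI)
    fix i assume i: "i \<in> {1..N}"
    let ?r = "resid p x y k \<alpha> \<beta> i"
    show "(if 0 < u i then (8 * pi * (u i)^3) powr (-1/2) * exp (- u i * d / 2 - 1 / (8 * u i)) else 0)
      \<le> (if 0 < u i then (8 * pi * (u i)^3) powr (-1/2) *
          exp (- u i * ?r\<^sup>2 / (2 * \<tau>) + \<bar>?r\<bar> / (2 * sqrt \<tau>) - 1 / (8 * u i)) else 0)"
    proof (cases "0 < u i")
      case True
      have "u i * (?r\<^sup>2 / \<tau>) \<le> u i * d" using True resid_bound[OF i] by (intro mult_left_mono) auto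
      moreover have "0 \<le> \<bar>?r\<bar> / (2 * sqrt \<tau>)" using \<tau> by simp
      ultimately have "- u i * d / 2 - 1 / (8 * u i) \<le>
          - u i * ?r\<^sup>2 / (2 * \<tau>) + \<bar>?r\<bar> / (2 * sqrt \<tau>) - 1 / (8 * u i)"
        by (simp add: field_simps)
      thus ?thesis using True by (simp add: mult_left_mono)
    qed simp
  qed simp
qed

lemma fU_minorant_pos:
  assumes "pos_weights N u"
  shows "fU_minorant N d u > 0"
  unfolding fU_minorant_def
proof (intro prod_pos)
  fix i assume "i \<in> {1..N}"
  hence "0 < u i" using assms by (simp add: pos_weights_def)
  moreover from this have "8 * pi * (u i)^3 \<noteq> 0" by simp
  ultimately show "0 < (if 0 < u i then (8 * pi * (u i)^3) powr (-1/2) *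
      exp (- u i * d / 2 - 1 / (8 * u i)) else 0)" by simp
qed

section \<open>The minorizing measure\<close>

lemma sigma_finite_PiM_lborel:
  assumes "finite I"
  shows "sigma_finite_measure (PiM I (\<lambda>_. lborel :: real measure))"
proof -
  interpret product_sigma_finite "\<lambda>_::'a. lborel :: real measure" by standard
  show ?thesis by (rule sigma_finite) fact
qed

lemma nn_integral_pair_pair:
  assumes M2: "sigma_finite_measure M2" and M3: "sigma_finite_measure M3"
    and f: "f \<in> borel_measurable (M1 \<Otimes>\<^sub>M (M2 \<Otimes>\<^sub>M M3))"
  shows "integral\<^sup>N (M1 \<Otimes>\<^sub>M (M2 \<Otimes>\<^sub>M M3)) f = (\<integral>\<^sup>+x. \<integral>\<^sup>+y. \<integral>\<^sup>+z. f (x, y, z) \<partial>M3 \<partial>M2 \<partial>M1)"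
proof -
  have M23: "sigma_finite_measure (M2 \<Otimes>\<^sub>M M3)" by (rule sigma_finite_pair_measure[OF M2 M3])
  have "integral\<^sup>N (M1 \<Otimes>\<^sub>M (M2 \<Otimes>\<^sub>M M3)) f = (\<integral>\<^sup>+x. \<integral>\<^sup>+w. f (x, w) \<partial>(M2 \<Otimes>\<^sub>M M3) \<partial>M1)"
    using sigma_finite_measure.nn_integral_fst[OF M23 f] by simp
  also have "\<dots> = (\<integral>\<^sup>+x. \<integral>\<^sup>+y. \<integral>\<^sup>+z. f (x, y, z) \<partial>M3 \<partial>M2 \<partial>M1)"
  proof (rule nn_integral_cong)
    fix x assume "x \<in> space M1"
    from measurable_Pair2[OF f this]
    have "(\<lambda>w. f (x, w)) \<in> borel_measurable (M2 \<Otimes>\<^sub>M M3)" by simp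
    thus "(\<integral>\<^sup>+w. f (x, w) \<partial>(M2 \<Otimes>\<^sub>M M3)) = (\<integral>\<^sup>+y. \<integral>\<^sup>+z. f (x, y, z) \<partial>M3 \<partial>M2)"
      using sigma_finite_measure.nn_integral_fst[OF M3, of "\<lambda>w. f (x, w)" M2] by simp
  qed
  finally show ?thesis .
qed

lemma borel_measurable_pair_pair_sections:
  assumes M3: "sigma_finite_measure M3" and f: "f \<in> borel_measurable (M1 \<Otimes>\<^sub>M (M2 \<Otimes>\<^sub>M M3))"
    and x: "x \<in> space M1"
  shows "y \<in> space M2 \<Longrightarrow> (\<lambda>z. f (x, y, z)) \<in> borel_measurable M3"
    and "(\<lambda>y. \<integral>\<^sup>+z. f (x, y, z) \<partial>M3) \<in> borel_measurable M2"
proof -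
  have fx: "(\<lambda>w. f (x, w)) \<in> borel_measurable (M2 \<Otimes>\<^sub>M M3)" using measurable_Pair2[OF f x] by simp
  show "y \<in> space M2 \<Longrightarrow> (\<lambda>z. f (x, y, z)) \<in> borel_measurable M3"
    using measurable_Pair2[OF fx] by simp
  show "(\<lambda>y. \<integral>\<^sup>+z. f (x, y, z) \<partial>M3) \<in> borel_measurable M2"
    using sigma_finite_measure.borel_measurable_nn_integral_fst[OF M3 fx] by simp
qed

definition gibbs_space :: "nat \<Rightarrow> nat \<Rightarrow> nat \<Rightarrow> ((nat \<Rightarrow> real) \<times> real \<times> (nat \<Rightarrow> real)) measure" where
  "gibbs_space N p k = PiM {1..N} (\<lambda>_. lborel) \<Otimes>\<^sub>M (lborel \<Otimes>\<^sub>M PiM {..<p + k} (\<lambda>_. lborel))"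

(* Outside the guard, Minv and the densities are junk values; excluding that null set keeps
   the density measurable. *)
definition gibbs_density :: "nat \<Rightarrow> nat \<Rightarrow> (nat \<Rightarrow> nat \<Rightarrow> real) \<Rightarrow> (int \<Rightarrow> real) \<Rightarrow> real \<Rightarrow> nat
    \<Rightarrow> (nat \<Rightarrow> real) \<times> real \<times> (nat \<Rightarrow> real) \<Rightarrow> ennreal" where
  "gibbs_density N p x y \<sigma> k = (\<lambda>(u, t, \<theta>).
     if pos_weights N u \<and> 0 < t then
       ennreal (inv_gamma_density (real N / 2) (ig_scale N p x y \<sigma> k u) t) *
       ennreal (mvnormal_density (p + k) (post_mean N p x y \<sigma> k u)
                  (t \<cdot>\<^sub>m Minv N p x y \<sigma> k u) (Matrix.vec (p + k) \<theta>))
     else 0)"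

(* Any t \<le> 0 has zero density; mapping it to 1 only keeps the map inside the state space. *)
definition gibbs_state :: "nat \<Rightarrow> nat \<Rightarrow> (nat \<Rightarrow> real) \<times> real \<times> (nat \<Rightarrow> real)
    \<Rightarrow> (nat \<Rightarrow> real) \<times> (nat \<Rightarrow> real) \<times> real" where
  "gibbs_state p k = (\<lambda>(u, t, \<theta>).
     (restrict (\<lambda>l. \<theta> (p + l)) {..<k}, restrict \<theta> {..<p}, if 0 < t then t else 1))"

definition minorizing_measure :: "nat \<Rightarrow> nat \<Rightarrow> (nat \<Rightarrow> nat \<Rightarrow> real) \<Rightarrow> (int \<Rightarrow> real) \<Rightarrow> real
    \<Rightarrow> nat \<Rightarrow> real \<Rightarrow> ((nat \<Rightarrow> real) \<times> (nat \<Rightarrow> real) \<times> real) measure" where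
  "minorizing_measure N p x y \<sigma> k d =
     distr (density (gibbs_space N p k)
              (\<lambda>z. ennreal (fU_minorant N d (fst z)) * gibbs_density N p x y \<sigma> k z))
       (state_space p k) (gibbs_state p k)"

lemma measurable_coefficients_to_state:
  assumes "t > 0"
  shows "(\<lambda>\<theta>. (restrict (\<lambda>l. \<theta> (p + l)) {..<k}, restrict \<theta> {..<p}, t))
    \<in> PiM {..<p + k} (\<lambda>_. lborel) \<rightarrow>\<^sub>M state_space p k"
  unfolding state_space_def
proof (intro measurable_Pair)
  show "(\<lambda>\<theta>. restrict (\<lambda>l. \<theta> (p + l)) {..<k}) \<in> PiM {..<p + k} (\<lambda>_. lborel) \<rightarrow>\<^sub>M PiM {..<k} (\<lambda>_. lborel)"
    by measurable
  show "(\<lambda>\<theta>. restrict \<theta> {..<p}) \<in> PiM {..<p + k} (\<lambda>_. lborel) \<rightarrow>\<^sub>M PiM {..<p} (\<lambda>_. lborel)"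
    by measurable
  show "(\<lambda>\<theta>. t) \<in> PiM {..<p + k} (\<lambda>_. lborel) \<rightarrow>\<^sub>M restrict_space lborel {0<..}"
    using assms by (intro measurable_const) (simp add: space_restrict_space)
qed

lemma measurable_gibbs_state: "gibbs_state p k \<in> gibbs_space N p k \<rightarrow>\<^sub>M state_space p k"
proof -
  have "gibbs_state p k = (\<lambda>z. (restrict (\<lambda>l. snd (snd z) (p + l)) {..<k},
      restrict (snd (snd z)) {..<p}, if 0 < fst (snd z) then fst (snd z) else 1))"
    by (auto simp: gibbs_state_def case_prod_beta)
  also have "\<dots> \<in> gibbs_space N p k \<rightarrow>\<^sub>M state_space p k"
    unfolding state_space_def
  proof (intro measurable_Pair)
    show "(\<lambda>z. restrict (\<lambda>l. snd (snd z) (p + l)) {..<k})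
        \<in> gibbs_space N p k \<rightarrow>\<^sub>M PiM {..<k} (\<lambda>_. lborel)"
      unfolding gibbs_space_def by measurable
    show "(\<lambda>z. restrict (snd (snd z)) {..<p}) \<in> gibbs_space N p k \<rightarrow>\<^sub>M PiM {..<p} (\<lambda>_. lborel)"
      unfolding gibbs_space_def by measurable
    show "(\<lambda>z. if 0 < fst (snd z) then fst (snd z) else 1)
        \<in> gibbs_space N p k \<rightarrow>\<^sub>M restrict_space lborel {0<..}"
      by (rule measurable_restrict_space2) (auto simp: gibbs_space_def)
  qed
  finally show ?thesis .
qed

lemma borel_measurable_gibbs_density:
  assumes \<sigma>: "\<sigma> > 0"
  shows "gibbs_density N p x y \<sigma> k \<in> borel_measurable (gibbs_space N p k)"
proof -
  let ?P = "gibbs_space N p k"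
  let ?R = "restrict_space ?P {z. pos_weights N (fst z) \<and> 0 < fst (snd z)}"
  have eq: "gibbs_density N p x y \<sigma> k = (\<lambda>z. if pos_weights N (fst z) \<and> 0 < fst (snd z) then
      ennreal (inv_gamma_density (real N / 2) (ig_scale N p x y \<sigma> k (fst z)) (fst (snd z))) *
      ennreal (mvnormal_density (p + k) (post_mean N p x y \<sigma> k (fst z))
         (fst (snd z) \<cdot>\<^sub>m Minv N p x y \<sigma> k (fst z)) (Matrix.vec (p + k) (snd (snd z))))
      else 0)"
    by (auto simp: gibbs_density_def case_prod_beta)
  have G: "{z \<in> space ?P. pos_weights N (fst z) \<and> 0 < fst (snd z)} \<in> sets ?P"
    unfolding pos_weights_def gibbs_space_def by measurable
  have U: "(\<lambda>z. fst z i) \<in> borel_measurable ?R" if "i \<in> {1..N}" for i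
    by (rule measurable_restrict_space1) (use that in \<open>simp add: gibbs_space_def, measurable\<close>)
  have pos: "pos_weights N (fst z)" and T_pos: "fst (snd z) > 0" if "z \<in> space ?R" for z
    using that by (auto simp: space_restrict_space)
  have T: "(\<lambda>z. fst (snd z)) \<in> borel_measurable ?R"
    by (rule measurable_restrict_space1) (simp add: gibbs_space_def)
  have V: "vec_measurable ?R (\<lambda>z. Matrix.vec (p + k) (snd (snd z))) (p + k)"
    by (rule vec_measurable_vec, rule measurable_restrict_space1) (simp add: gibbs_space_def)
  note [measurable] = borel_measurable_inv_gamma_density[OF U pos \<sigma> T]
    borel_measurable_mvnormal_density[OF U pos \<sigma> T T_pos V]
  show ?thesis
    unfolding eq by (subst measurable_If_restrict_space_iff[OF G]) (simp, measurable)
qed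

lemma emeasure_minorizing_measure:
  assumes \<sigma>: "\<sigma> > 0" and A: "A \<in> sets (state_space p k)"
  shows "emeasure (minorizing_measure N p x y \<sigma> k d) A =
    (\<integral>\<^sup>+u. \<integral>\<^sup>+t. \<integral>\<^sup>+\<theta>. ennreal (fU_minorant N d u) *
        (gibbs_density N p x y \<sigma> k (u, t, \<theta>) * indicator A (gibbs_state p k (u, t, \<theta>)))
      \<partial>PiM {..<p + k} (\<lambda>_. lborel) \<partial>lborel \<partial>PiM {1..N} (\<lambda>_. lborel))"
proof -
  let ?P = "gibbs_space N p k"
  define D where "D = (\<lambda>z. ennreal (fU_minorant N d (fst z)) * gibbs_density N p x y \<sigma> k z)"
  have "(\<lambda>z. ennreal (fU_minorant N d (fst z))) \<in> borel_measurable ?P"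
    unfolding fU_minorant_def gibbs_space_def by measurable
  hence D: "D \<in> borel_measurable ?P"
    unfolding D_def using borel_measurable_gibbs_density[OF \<sigma>] by measurable
  have F: "gibbs_state p k \<in> density ?P D \<rightarrow>\<^sub>M state_space p k"
    using measurable_gibbs_state by (subst measurable_cong_sets[OF sets_density refl])
  have DA: "(\<lambda>z. D z * indicator A (gibbs_state p k z)) \<in> borel_measurable ?P"
    using D measurable_gibbs_state A by measurable
  have "emeasure (minorizing_measure N p x y \<sigma> k d) A =
      emeasure (density ?P D) (gibbs_state p k -` A \<inter> space ?P)"
    unfolding minorizing_measure_def D_def[symmetric] by (subst emeasure_distr[OF F A]) simp
  also have "\<dots> = (\<integral>\<^sup>+z. D z * indicator (gibbs_state p k -` A \<inter> space ?P) z \<partial>?P)"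
    by (rule emeasure_density[OF D measurable_sets[OF measurable_gibbs_state A]])
  also have "\<dots> = (\<integral>\<^sup>+z. D z * indicator A (gibbs_state p k z) \<partial>?P)"
    by (intro nn_integral_cong) (auto simp: indicator_def)
  also have "\<dots> = (\<integral>\<^sup>+u. \<integral>\<^sup>+t. \<integral>\<^sup>+\<theta>. D (u, t, \<theta>) * indicator A (gibbs_state p k (u, t, \<theta>))
      \<partial>PiM {..<p + k} (\<lambda>_. lborel) \<partial>lborel \<partial>PiM {1..N} (\<lambda>_. lborel))"
    using nn_integral_pair_pair[OF lborel.sigma_finite_measure_axioms sigma_finite_PiM_lborel DA[unfolded gibbs_space_def]]
    unfolding gibbs_space_def by simp
  finally show ?thesis by (simp add: D_def mult.assoc)
qed

lemma nn_integral_gibbs_density_le: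
  assumes \<sigma>: "\<sigma> > 0" and A: "A \<in> sets (state_space p k)"
  shows "(\<integral>\<^sup>+\<theta>. gibbs_density N p x y \<sigma> k (u, t, \<theta>) * indicator A (gibbs_state p k (u, t, \<theta>))
      \<partial>PiM {..<p + k} (\<lambda>_. lborel))
    \<le> ennreal (inv_gamma_density (real N / 2) (ig_scale N p x y \<sigma> k u) t) *
      (\<integral>\<^sup>+\<theta>. ennreal (mvnormal_density (p + k) (post_mean N p x y \<sigma> k u)
            (t \<cdot>\<^sub>m Minv N p x y \<sigma> k u) (Matrix.vec (p + k) \<theta>)) *
          indicator A (restrict (\<lambda>l. \<theta> (p + l)) {..<k}, restrict \<theta> {..<p}, t)
        \<partial>PiM {..<p + k} (\<lambda>_. lborel))"
proof (cases "pos_weights N u \<and> 0 < t")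
  case False
  hence "gibbs_density N p x y \<sigma> k (u, t, \<theta>) = 0" for \<theta> by (auto simp: gibbs_density_def)
  thus ?thesis by simp
next
  case True
  let ?PT = "PiM {..<p + k} (\<lambda>_. lborel :: real measure)"
  have V: "vec_measurable ?PT (\<lambda>\<theta>. Matrix.vec (p + k) \<theta>) (p + k)"
    by (rule vec_measurable_vec) simp
  have [measurable]: "(\<lambda>\<theta>. mvnormal_density (p + k) (post_mean N p x y \<sigma> k u)
      (t \<cdot>\<^sub>m Minv N p x y \<sigma> k u) (Matrix.vec (p + k) \<theta>)) \<in> borel_measurable ?PT"
    by (rule borel_measurable_mvnormal_density[where U = "\<lambda>_. u" and T = "\<lambda>_. t", OF _ _ \<sigma> _ _ V])
      (use True in auto)
  note [measurable] = measurable_coefficients_to_state[of t p k] A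
  show ?thesis
    using True by (simp add: gibbs_density_def gibbs_state_def mult.assoc nn_integral_cmult)
qed

lemma minorizing_measure_le_Pk:
  assumes \<sigma>: "\<sigma> > 0" and s: "s \<in> space (state_space p k)" and V: "V_fun N p x y k s \<le> d"
    and A: "A \<in> sets (state_space p k)"
  shows "emeasure (minorizing_measure N p x y \<sigma> k d) A \<le> Pk N p x y \<sigma> k s A"
proof -
  let ?PU = "PiM {1..N} (\<lambda>_. lborel :: real measure)"
    and ?PT = "PiM {..<p + k} (\<lambda>_. lborel :: real measure)"
  define H where "H = (\<lambda>z. gibbs_density N p x y \<sigma> k z * indicator A (gibbs_state p k z))"
  have H: "H \<in> borel_measurable (?PU \<Otimes>\<^sub>M (lborel \<Otimes>\<^sub>M ?PT))"
    using borel_measurable_gibbs_density[OF \<sigma>] measurable_gibbs_state A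
    unfolding H_def gibbs_space_def by measurable
  have PT: "sigma_finite_measure ?PT" by (rule sigma_finite_PiM_lborel) simp
  have inner: "(\<integral>\<^sup>+t. \<integral>\<^sup>+\<theta>. ennreal (fU_minorant N d u) * H (u, t, \<theta>) \<partial>?PT \<partial>lborel)
    \<le> ennreal (fU N p x y k s u) *
      (\<integral>\<^sup>+t. ennreal (inv_gamma_density (real N / 2) (ig_scale N p x y \<sigma> k u) t) *
        (\<integral>\<^sup>+\<theta>. ennreal (mvnormal_density (p + k) (post_mean N p x y \<sigma> k u)
              (t \<cdot>\<^sub>m Minv N p x y \<sigma> k u) (Matrix.vec (p + k) \<theta>)) *
            indicator A (restrict (\<lambda>l. \<theta> (p + l)) {..<k}, restrict \<theta> {..<p}, t) \<partial>?PT) \<partial>lborel)"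
    if u: "u \<in> space ?PU" for u
  proof -
    note sections = borel_measurable_pair_pair_sections[OF PT H u]
    have "(\<integral>\<^sup>+t. \<integral>\<^sup>+\<theta>. ennreal (fU_minorant N d u) * H (u, t, \<theta>) \<partial>?PT \<partial>lborel)
        = (\<integral>\<^sup>+t. ennreal (fU_minorant N d u) * (\<integral>\<^sup>+\<theta>. H (u, t, \<theta>) \<partial>?PT) \<partial>lborel)"
      using sections(1) by (intro nn_integral_cong nn_integral_cmult) simp
    also have "\<dots> = ennreal (fU_minorant N d u) * (\<integral>\<^sup>+t. \<integral>\<^sup>+\<theta>. H (u, t, \<theta>) \<partial>?PT \<partial>lborel)"
      using sections(2) by (rule nn_integral_cmult)
    also have "\<dots> \<le> ennreal (fU N p x y k s u) * (\<integral>\<^sup>+t. \<integral>\<^sup>+\<theta>. H (u, t, \<theta>) \<partial>?PT \<partial>lborel)"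
      by (intro mult_right_mono ennreal_leI fU_minorant_le_fU[OF s V]) simp
    also have "\<dots> \<le> ennreal (fU N p x y k s u) *
      (\<integral>\<^sup>+t. ennreal (inv_gamma_density (real N / 2) (ig_scale N p x y \<sigma> k u) t) *
        (\<integral>\<^sup>+\<theta>. ennreal (mvnormal_density (p + k) (post_mean N p x y \<sigma> k u)
              (t \<cdot>\<^sub>m Minv N p x y \<sigma> k u) (Matrix.vec (p + k) \<theta>)) *
            indicator A (restrict (\<lambda>l. \<theta> (p + l)) {..<k}, restrict \<theta> {..<p}, t) \<partial>?PT) \<partial>lborel)"
      unfolding H_def by (intro mult_left_mono nn_integral_mono nn_integral_gibbs_density_le[OF \<sigma> A]) simp
    finally show ?thesis .
  qed
  have "emeasure (minorizing_measure N p x y \<sigma> k d) A =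
      (\<integral>\<^sup>+u. \<integral>\<^sup>+t. \<integral>\<^sup>+\<theta>. ennreal (fU_minorant N d u) * H (u, t, \<theta>) \<partial>?PT \<partial>lborel \<partial>?PU)"
    unfolding H_def by (rule emeasure_minorizing_measure[OF \<sigma> A])
  also have "\<dots> \<le> Pk N p x y \<sigma> k s A"
    unfolding Pk_def by (intro nn_integral_mono inner)
  finally show ?thesis .
qed

(* A nonzero determinant suffices for positivity, since a powr b > 0 for every real a \<noteq> 0. *)
lemma gibbs_density_pos:
  assumes N: "N \<ge> 1" and \<sigma>: "\<sigma> > 0" and y: "\<exists>i\<in>{1..N}. y (int i) \<noteq> 0"
    and u: "pos_weights N u" and t: "t > 0"
  shows "gibbs_density N p x y \<sigma> k (u, t, \<theta>) > 0"
proof -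
  have "ig_scale N p x y \<sigma> k u > 0" by (rule ig_scale_pos[OF u \<sigma> y])
  moreover have "Gamma (real N / 2) > 0" using N by (intro Gamma_real_pos) simp
  ultimately have "inv_gamma_density (real N / 2) (ig_scale N p x y \<sigma> k u) t > 0"
    using t by (simp add: inv_gamma_density_def)
  moreover have "Determinant.det (t \<cdot>\<^sub>m Minv N p x y \<sigma> k u) \<noteq> 0"
    using Minv(2,3)[OF u \<sigma>, of p x y k] t by simp
  hence "mvnormal_density (p + k) (post_mean N p x y \<sigma> k u) (t \<cdot>\<^sub>m Minv N p x y \<sigma> k u)
      (Matrix.vec (p + k) \<theta>) > 0"
    by (simp add: mvnormal_density_def)
  ultimately show ?thesis using u t by (simp add: gibbs_density_def ennreal_zero_less_mult_iff)
qed

lemma emeasure_gibbs_space_unit_box: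
  "emeasure (gibbs_space N p k)
     (PiE {1..N} (\<lambda>_. {0<..<1}) \<times> ({0<..<1} \<times> PiE {..<p + k} (\<lambda>_. {0<..<1}))) = 1"
proof -
  interpret product_sigma_finite "\<lambda>_::nat. lborel :: real measure" by standard
  let ?PU = "PiM {1..N} (\<lambda>_. lborel :: real measure)"
    and ?PT = "PiM {..<p + k} (\<lambda>_. lborel :: real measure)"
  have PT: "sigma_finite_measure ?PT" by (rule sigma_finite_PiM_lborel) simp
  have TPT: "sigma_finite_measure (lborel \<Otimes>\<^sub>M ?PT)"
    by (rule sigma_finite_pair_measure[OF lborel.sigma_finite_measure_axioms PT])
  have "emeasure (gibbs_space N p k)
      (PiE {1..N} (\<lambda>_. {0<..<1}) \<times> ({0<..<1} \<times> PiE {..<p + k} (\<lambda>_. {0<..<1}))) =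
    emeasure ?PU (PiE {1..N} (\<lambda>_. {0<..<1})) *
      (emeasure lborel {0<..<1::real} * emeasure ?PT (PiE {..<p + k} (\<lambda>_. {0<..<1})))"
    unfolding gibbs_space_def
    by (simp add: sigma_finite_measure.emeasure_pair_measure_Times[OF TPT]
        sigma_finite_measure.emeasure_pair_measure_Times[OF PT] sets_PiM_I_finite pair_measureI)
  also have "\<dots> = 1" by (simp add: emeasure_PiM)
  finally show ?thesis .
qed

lemma minorizing_measure_nonzero:
  assumes N: "N \<ge> 1" and \<sigma>: "\<sigma> > 0" and y: "\<exists>i\<in>{1..N}. y (int i) \<noteq> 0"
  shows "emeasure (minorizing_measure N p x y \<sigma> k d) (space (minorizing_measure N p x y \<sigma> k d)) \<noteq> 0"
proof
  let ?P = "gibbs_space N p k" and ?\<nu> = "minorizing_measure N p x y \<sigma> k d"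
  define D where "D = (\<lambda>z. ennreal (fU_minorant N d (fst z)) * gibbs_density N p x y \<sigma> k z)"
  define B where "B = PiE {1..N} (\<lambda>_. {0<..<1::real}) \<times>
    ({0<..<1::real} \<times> PiE {..<p + k} (\<lambda>_. {0<..<1::real}))"
  have "(\<lambda>z. ennreal (fU_minorant N d (fst z))) \<in> borel_measurable ?P"
    unfolding fU_minorant_def gibbs_space_def by measurable
  hence D: "D \<in> borel_measurable ?P"
    unfolding D_def using borel_measurable_gibbs_density[OF \<sigma>] by measurable
  have F: "gibbs_state p k \<in> density ?P D \<rightarrow>\<^sub>M state_space p k"
    using measurable_gibbs_state by (subst measurable_cong_sets[OF sets_density refl])
  assume "emeasure ?\<nu> (space ?\<nu>) = 0"
  moreover have "emeasure ?\<nu> (space ?\<nu>) = integral\<^sup>N ?P D"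
  proof -
    have "emeasure ?\<nu> (space ?\<nu>) = emeasure (density ?P D) (gibbs_state p k -` space (state_space p k) \<inter> space ?P)"
      unfolding minorizing_measure_def D_def[symmetric] by (subst emeasure_distr[OF F]) simp_all
    also have "gibbs_state p k -` space (state_space p k) \<inter> space ?P = space ?P"
      using measurable_space[OF measurable_gibbs_state] by auto
    also have "emeasure (density ?P D) (space ?P) = (\<integral>\<^sup>+z. D z * indicator (space ?P) z \<partial>?P)"
      by (rule emeasure_density[OF D]) simp
    also have "\<dots> = integral\<^sup>N ?P D" by (intro nn_integral_cong) (auto simp: indicator_def)
    finally show ?thesis .
  qed
  ultimately have "emeasure ?P {z \<in> space ?P. D z \<noteq> 0} = 0"
    using nn_integral_0_iff[OF D] by simp
  moreover have "B \<subseteq> {z \<in> space ?P. D z \<noteq> 0}"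
  proof
    fix z assume z: "z \<in> B"
    then obtain u t \<theta> where z_eq: "z = (u, t, \<theta>)" and u: "pos_weights N u" and t: "0 < t"
      by (cases z) (auto simp: B_def pos_weights_def PiE_def Pi_def)
    have "D z > 0"
      using fU_minorant_pos[OF u] gibbs_density_pos[OF N \<sigma> y u t]
      by (simp add: D_def z_eq ennreal_zero_less_mult_iff)
    moreover have "z \<in> space ?P" using z by (auto simp: B_def gibbs_space_def space_pair_measure space_PiM PiE_iff)
    ultimately show "z \<in> {z \<in> space ?P. D z \<noteq> 0}" by simp
  qed
  hence "emeasure ?P B \<le> emeasure ?P {z \<in> space ?P. D z \<noteq> 0}"
    by (rule emeasure_mono) (use D in measurable)
  ultimately show False
    using emeasure_gibbs_space_unit_box[of N p k] unfolding B_def by simp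
qed

theorem mainTheorem10:
  fixes N p kmax k :: nat
    and x :: "nat \<Rightarrow> nat \<Rightarrow> real"
    and y :: "int \<Rightarrow> real"
    and \<sigma> :: real
  assumes "N \<ge> 1" and "p \<ge> 1" and "k \<le> kmax" and "\<sigma> > 0"
    and "\<exists>i\<in>{1..N}. y (int i) \<noteq> 0"
  shows "\<forall>d>0. \<exists>\<nu>. sets \<nu> = sets (state_space p k) \<and> emeasure \<nu> (space \<nu>) \<noteq> 0 \<and>
           (\<forall>s\<in>space (state_space p k). V_fun N p x y k s \<le> d \<longrightarrow>
              (\<forall>A\<in>sets (state_space p k). emeasure \<nu> A \<le> Pk N p x y \<sigma> k s A))"
proof (intro allI impI)
  fix d :: real
  show "\<exists>\<nu>. sets \<nu> = sets (state_space p k) \<and> emeasure \<nu> (space \<nu>) \<noteq> 0 \<and>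
           (\<forall>s\<in>space (state_space p k). V_fun N p x y k s \<le> d \<longrightarrow>
              (\<forall>A\<in>sets (state_space p k). emeasure \<nu> A \<le> Pk N p x y \<sigma> k s A))"
  proof (intro exI[of _ "minorizing_measure N p x y \<sigma> k d"] conjI ballI impI)
    show "sets (minorizing_measure N p x y \<sigma> k d) = sets (state_space p k)"
      by (simp add: minorizing_measure_def)
    show "emeasure (minorizing_measure N p x y \<sigma> k d) (space (minorizing_measure N p x y \<sigma> k d)) \<noteq> 0"
      using minorizing_measure_nonzero assms by blast
  next
    fix s A assume "s \<in> space (state_space p k)" "V_fun N p x y k s \<le> d" "A \<in> sets (state_space p k)"
    thus "emeasure (minorizing_measure N p x y \<sigma> k d) A \<le> Pk N p x y \<sigma> k s A"
      using minorizing_measure_le_Pk assms(4) by blast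
  qed
qed

end
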